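(* Suppose there is an algorithm which, given any integer linear recurrence sequence $\langle u_n\rangle_{n=0}^\infty$ of order $6$, decides whether there exists $N$ such that $u_n\ge 0$ for all $n\ge N$ (i.e. the Ultimate Positivity Problem is decidable for integer LRS of order $6$). Then for every $t\in\mathcal{T}$, the Lagrange constant $L_\infty(t)$ is a computable real number.
   Context: An integer linear recurrence sequence (LRS) of order $k$ is a sequence $\langle u_n\rangle_{n=0}^\infty$ of integers for which there are integers $a_1,\ldots,a_k$ with $a_k\ne 0$ such that $u_{n+k}=a_1u_{n+k-1}+\cdots+a_ku_n$ for all $n\ge0$; it is given as input by the $2k$-tuple $(a_1,\ldots,a_k,u_0,\ldots,u_{k-1})$. For a real number $x$, the Lagrange constant is $L_\infty(x)=\inf\{c\in\mathbb{R}: |x-\frac{n}{m}|<\frac{c}{m^2} \text{ for infinitely many pairs } (n,m) \text{ with } n,m\in\mathbb{Z},\ m\neq 0\}$. Let $\mathcal{A}=\{p+qi\in\mathbb{C}: p,q\in\mathbb{Q},\ p^2+q^2=1,\ p\neq 0,\ q\neq 0\}$, and let $\mathcal{T}=\{\frac{\arg\alpha}{2\pi}:\alpha\in\mathcal{A}\}$, where $\arg$ denotes the principal argument with values in $(-\pi,\pi]$. A real number $x$ is computable if there is an algorithm which, given any rational $\varepsilon>0$, returns a rational $q$ with $|q-x|<\varepsilon$. *)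

theory Defs
  imports "HOL-Analysis.Analysis" "HOL-Library.Nat_Bijection"
begin

datatype recf =
    Zero
  | Succ
  | Proj nat
  | Comp recf "recf list"
  | Prec recf recf
  | Minim recf

inductive eval :: "recf \<Rightarrow> nat list \<Rightarrow> nat \<Rightarrow> bool" where
  eval_Zero: "eval Zero xs 0"
| eval_Succ: "eval Succ (x # xs) (Suc x)"
| eval_Proj: "i < length xs \<Longrightarrow> eval (Proj i) xs (xs ! i)"
| eval_Comp: "length ys = length gs \<Longrightarrow> (\<forall>i < length gs. eval (gs ! i) xs (ys ! i))
     \<Longrightarrow> eval f ys z \<Longrightarrow> eval (Comp f gs) xs z"
| eval_Prec0: "eval f xs y \<Longrightarrow> eval (Prec f g) (0 # xs) y"
| eval_PrecS: "eval (Prec f g) (n # xs) y \<Longrightarrow> eval g (n # y # xs) z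
     \<Longrightarrow> eval (Prec f g) (Suc n # xs) z"
| eval_Minim: "eval f (n # xs) 0 \<Longrightarrow> (\<forall>m < n. \<exists>y. eval f (m # xs) y \<and> y \<noteq> 0)
     \<Longrightarrow> eval (Minim f) xs n"

definition rat_of_code :: "nat \<Rightarrow> real" where
  "rat_of_code c = real_of_int (int_decode (fst (prod_decode c))) / real (Suc (snd (prod_decode c)))"

text \<open>A real x is computable: some algorithm, given a positive rational
  eps = p / (n+1) (with p \<ge> 1) as the pair [p, n], returns (a code of) a rational q with
  |q - x| < eps.\<close>
definition computable_real :: "real \<Rightarrow> bool" where
  "computable_real x \<longleftrightarrow> (\<exists>f. \<forall>p n. p > 0 \<longrightarrow>
      (\<exists>c. eval f [p, n] c \<and> \<bar>rat_of_code c - x\<bar> < real p / real (Suc n)))"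

text \<open>u is the integer LRS with recurrence coefficients a = [a_1,...,a_k]
  and initial values u0 = [u_0,...,u_{k-1}]:
  u (n+k) = a_1 u(n+k-1) + ... + a_k u(n).\<close>
definition is_LRS :: "int list \<Rightarrow> int list \<Rightarrow> (nat \<Rightarrow> int) \<Rightarrow> bool" where
  "is_LRS a u0 u \<longleftrightarrow> length a = length u0 \<and>
     (\<forall>i < length u0. u i = u0 ! i) \<and>
     (\<forall>n. u (n + length a) = (\<Sum>j < length a. a ! j * u (n + length a - 1 - j)))"

definition ultimately_nonneg :: "(nat \<Rightarrow> int) \<Rightarrow> bool" where
  "ultimately_nonneg u \<longleftrightarrow> (\<exists>N. \<forall>n \<ge> N. u n \<ge> 0)"

text \<open>Decidability of the Ultimate Positivity Problem for integer LRS of order 6: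
  an algorithm which, on input the 12-tuple (a_1..a_6,u_0..u_5) (each integer coded
  by int_encode) with a_6 \<noteq> 0, halts with a nonzero output iff the LRS is ultimately
  nonnegative.\<close>
definition UPP_decidable_order6 :: bool where
  "UPP_decidable_order6 \<longleftrightarrow> (\<exists>d. \<forall>a u0 :: int list.
      length a = 6 \<longrightarrow> length u0 = 6 \<longrightarrow> a ! 5 \<noteq> 0 \<longrightarrow>
      (\<exists>r. eval d (map int_encode (a @ u0)) r \<and>
          (r \<noteq> 0 \<longleftrightarrow> (\<forall>u. is_LRS a u0 u \<longrightarrow> ultimately_nonneg u))))"

definition lagrange_constant :: "real \<Rightarrow> real" where
  "lagrange_constant x = Inf {c :: real. infinite {(n :: int, m :: int). m \<noteq> 0 \<and>
       \<bar>x - real_of_int n / real_of_int m\<bar> < c / (real_of_int m)\<^sup>2}}"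

definition setA :: "complex set" where
  "setA = {Complex p q | p q. p \<in> \<rat> \<and> q \<in> \<rat> \<and> p\<^sup>2 + q\<^sup>2 = 1 \<and> p \<noteq> 0 \<and> q \<noteq> 0}"

definition setT :: "real set" where
  "setT = (\<lambda>\<alpha>. Arg \<alpha> / (2 * pi)) ` setA"

end

theory Submission
  imports Defs "HOL-Real_Asymp.Real_Asymp"
begin

text \<open>
  Let t = Arg \<alpha> / (2 pi) with \<alpha> = (X + i Y) / z in setA. Rational points of the unit circle
  other than \<plusminus>1, \<plusminus>i are not roots of unity, so t is irrational.
  For positive integers C, D the integer sequences
  u(m) = D m (z^m - Re \<beta>^m) \<plusminus> C Im \<beta>^m,  \<beta> = X + i Y,
  satisfy a recurrence of order 6 with characteristic roots z, \<beta>, cnj \<beta>, each double.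
  With x = pi (m t - round (m t)) one has u(m) = z^m 2 sin x (D m sin x \<plusminus> C cos x), so both
  sequences are ultimately nonnegative iff eventually C cos x \<le> D m |sin x|. Elementary estimates
  on sin and cos turn this into C / (D pi) \<le> L(t), and its failure into L(t) \<le> C / (D pi).
  Deciding these instances for C = j, D = K and 0 < j \<le> 4 K locates pi L(t) within 1 / K;
  dividing by a Leibniz-series approximation of pi gives a rational approximation of L(t),
  computed by a partial recursive function.
\<close>

section \<open>Linear recurrences\<close>

definition satisfies_rec :: "'a::comm_ring list \<Rightarrow> (nat \<Rightarrow> 'a) \<Rightarrow> bool" where
  "satisfies_rec a w \<longleftrightarrow>
     (\<forall>n. w (n + length a) = (\<Sum>j<length a. a ! j * w (n + length a - 1 - j)))"

lemma is_LRS_iff: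
  "is_LRS a u0 u \<longleftrightarrow>
     length a = length u0 \<and> (\<forall>i < length u0. u i = u0 ! i) \<and> satisfies_rec a u"
  by (simp add: is_LRS_def satisfies_rec_def)

lemma is_LRS_unique:
  assumes "is_LRS a u0 u" "is_LRS a u0 v"
  shows "u = v"
proof
  fix n show "u n = v n"
  proof (induction n rule: less_induct)
    case (less n)
    show ?case
    proof (cases "n < length a")
      case True then show ?thesis using assms unfolding is_LRS_def by auto
    next
      case False
      then obtain m where m: "n = m + length a" by (metis add.commute le_add_diff_inverse not_less)
      have "u n = (\<Sum>j<length a. a ! j * u (m + length a - 1 - j))"
        using assms(1) m unfolding is_LRS_def by blast
      also have "\<dots> = (\<Sum>j<length a. a ! j * v (m + length a - 1 - j))"
        by (rule sum.cong) (use less m in auto)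
      also have "\<dots> = v n"
        using assms(2) m unfolding is_LRS_def by metis
      finally show ?thesis .
    qed
  qed
qed

lemma satisfies_rec_add:
  "satisfies_rec a w1 \<Longrightarrow> satisfies_rec a w2 \<Longrightarrow> satisfies_rec a (\<lambda>n. w1 n + w2 n)"
  by (simp add: satisfies_rec_def sum.distrib algebra_simps)

lemma satisfies_rec_scale: "satisfies_rec a w \<Longrightarrow> satisfies_rec a (\<lambda>n. c * w n)"
  by (simp add: satisfies_rec_def sum_distrib_left algebra_simps)

lemma satisfies_rec_of_int:
  "satisfies_rec (map of_int a :: 'a::{comm_ring_1, ring_char_0} list) (\<lambda>n. of_int (u n))
     \<longleftrightarrow> satisfies_rec a u"
proof -
  have "(\<Sum>j<length a. map of_int a ! j * (of_int (u (n + length a - 1 - j)) :: 'a))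
      = of_int (\<Sum>j<length a. a ! j * u (n + length a - 1 - j))" for n
    by simp
  then show ?thesis unfolding satisfies_rec_def by (simp del: of_int_sum)
qed

lemma satisfies_rec_geometric:
  fixes a :: "'a::comm_ring_1 list"
  assumes "l ^ length a = (\<Sum>j<length a. a ! j * l ^ (length a - 1 - j))"
  shows "satisfies_rec a (\<lambda>n. l ^ n)"
  unfolding satisfies_rec_def
proof
  fix n
  have "l ^ (n + length a) = l ^ n * (\<Sum>j<length a. a ! j * l ^ (length a - 1 - j))"
    by (simp only: power_add assms)
  also have "\<dots> = (\<Sum>j<length a. a ! j * l ^ (n + length a - 1 - j))"
    by (simp add: sum_distrib_left algebra_simps flip: power_add)
  finally show "l ^ (n + length a) = (\<Sum>j<length a. a ! j * l ^ (n + length a - 1 - j))" .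
qed

text \<open>The second hypothesis says l p'(l) = 0 for the characteristic polynomial p, i.e. together
  with the first one that l is a double root.\<close>
lemma satisfies_rec_n_geometric:
  fixes a :: "'a::comm_ring_1 list"
  assumes "l ^ length a = (\<Sum>j<length a. a ! j * l ^ (length a - 1 - j))"
    and "of_nat (length a) * l ^ length a
           = (\<Sum>j<length a. a ! j * of_nat (length a - 1 - j) * l ^ (length a - 1 - j))"
  shows "satisfies_rec a (\<lambda>n. of_nat n * l ^ n)"
  unfolding satisfies_rec_def
proof
  fix n
  let ?k = "length a"
  define d where "d j = ?k - 1 - j" for j
  have "of_nat (n + ?k) * l ^ (n + ?k) = of_nat n * l ^ n * l ^ ?k + l ^ n * (of_nat ?k * l ^ ?k)"
    by (simp add: power_add algebra_simps)
  also have "\<dots> = (\<Sum>j<?k. a ! j * (of_nat n + of_nat (d j)) * (l ^ n * l ^ d j))"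
    unfolding assms(2) unfolding assms(1) d_def[symmetric]
    by (simp add: sum_distrib_left sum.distrib algebra_simps)
  also have "\<dots> = (\<Sum>j<?k. a ! j * (of_nat (n + ?k - 1 - j) * l ^ (n + ?k - 1 - j)))"
  proof (intro sum.cong refl)
    fix j assume "j \<in> {..<?k}"
    then have "n + ?k - 1 - j = n + d j" by (simp add: d_def)
    then show "a ! j * (of_nat n + of_nat (d j)) * (l ^ n * l ^ d j)
        = a ! j * (of_nat (n + ?k - 1 - j) * l ^ (n + ?k - 1 - j))"
      by (simp add: power_add)
  qed
  finally show "of_nat (n + ?k) * l ^ (n + ?k)
      = (\<Sum>j<?k. a ! j * (of_nat (n + ?k - 1 - j) * l ^ (n + ?k - 1 - j)))" .
qed

fun gauss_pow :: "int \<Rightarrow> int \<Rightarrow> nat \<Rightarrow> int \<times> int" where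
  "gauss_pow X Y 0 = (1, 0)"
| "gauss_pow X Y (Suc m) =
     (X * fst (gauss_pow X Y m) - Y * snd (gauss_pow X Y m),
      X * snd (gauss_pow X Y m) + Y * fst (gauss_pow X Y m))"

lemma Complex_gauss_pow:
  "Complex (fst (gauss_pow X Y m)) (snd (gauss_pow X Y m)) = Complex X Y ^ m"
  by (induction m) (simp_all add: complex_eq_iff)

text \<open>The recurrence with characteristic polynomial (x - z)^2 (x^2 - 2 X x + z^2)^2.\<close>
definition test_coeffs :: "int \<Rightarrow> int \<Rightarrow> int list" where
  "test_coeffs X z = [4*X + 2*z, - (4*X^2 + 8*X*z + 3*z^2), 8*X^2*z + 8*X*z^2 + 4*z^3,
      - (4*X^2*z^2 + 8*X*z^3 + 3*z^4), 2*z^5 + 4*X*z^4, - (z^6)]"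

definition test_seq :: "int \<Rightarrow> int \<Rightarrow> int \<Rightarrow> int \<Rightarrow> int \<Rightarrow> int \<Rightarrow> nat \<Rightarrow> int" where
  "test_seq X Y z s C D m = D * int m * (z ^ m - fst (gauss_pow X Y m)) + s * C * snd (gauss_pow X Y m)"

lemma char_poly_double_root:
  fixes X z l :: complex
  assumes "l = z \<or> l^2 - 2 * X * l + z^2 = 0"
  shows "l^6 = (4*X + 2*z) * l^5 - (4*X^2 + 8*X*z + 3*z^2) * l^4
          + (8*X^2*z + 8*X*z^2 + 4*z^3) * l^3 - (4*X^2*z^2 + 8*X*z^3 + 3*z^4) * l^2
          + (2*z^5 + 4*X*z^4) * l - z^6
       \<and> 6 * l^6 = (4*X + 2*z) * 5 * l^5 - (4*X^2 + 8*X*z + 3*z^2) * 4 * l^4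
          + (8*X^2*z + 8*X*z^2 + 4*z^3) * 3 * l^3 - (4*X^2*z^2 + 8*X*z^3 + 3*z^4) * 2 * l^2
          + (2*z^5 + 4*X*z^4) * l"
proof (cases "l = z")
  case True show ?thesis unfolding True by (intro conjI; algebra)
next
  case False then show ?thesis using assms by (intro conjI; algebra)
qed

lemma test_coeffs_double_root:
  fixes l :: complex
  assumes "l = of_int z \<or> l^2 - 2 * of_int X * l + (of_int z)^2 = 0"
  defines "a \<equiv> map of_int (test_coeffs X z) :: complex list"
  shows "l ^ length a = (\<Sum>j<length a. a ! j * l ^ (length a - 1 - j))"
    and "of_nat (length a) * l ^ length a
           = (\<Sum>j<length a. a ! j * of_nat (length a - 1 - j) * l ^ (length a - 1 - j))"
  using char_poly_double_root[OF assms(1)]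
  by (simp_all add: a_def test_coeffs_def eval_nat_numeral lessThan_Suc algebra_simps)

lemma test_seq_complex:
  fixes X Y :: int
  defines "b \<equiv> Complex (of_int X) (of_int Y)"
  shows "of_int (test_seq X Y z s C D m) =
     of_int D * (of_nat m * of_int z ^ m) + (- of_int D / 2) * (of_nat m * b ^ m)
       + (- of_int D / 2) * (of_nat m * cnj b ^ m)
       + (of_int (s * C) / (2 * \<i>)) * b ^ m + (- of_int (s * C) / (2 * \<i>)) * cnj b ^ m"
proof -
  have bm: "b ^ m = Complex (fst (gauss_pow X Y m)) (snd (gauss_pow X Y m))"
    unfolding b_def Complex_gauss_pow ..
  have re: "of_int (fst (gauss_pow X Y m)) = (b ^ m + cnj b ^ m) / 2"
    by (simp add: bm complex_eq_iff flip: complex_cnj_power)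
  have im: "of_int (snd (gauss_pow X Y m)) = (b ^ m - cnj b ^ m) / (2 * \<i>)"
    by (simp add: bm complex_eq_iff flip: complex_cnj_power)
  have "of_int (test_seq X Y z s C D m)
      = of_int D * of_nat m * (of_int z ^ m - of_int (fst (gauss_pow X Y m)))
        + of_int (s * C) * (of_int (snd (gauss_pow X Y m)) :: complex)"
    by (simp add: test_seq_def)
  then show ?thesis
    unfolding re im by (simp add: diff_divide_distrib add_divide_distrib algebra_simps)
qed

lemma satisfies_rec_test_seq:
  assumes "X^2 + Y^2 = z^2"
  shows "satisfies_rec (test_coeffs X z) (test_seq X Y z s C D)"
proof -
  define b where "b = Complex (of_int X) (of_int Y)"
  have "b^2 - 2 * of_int X * b + (of_int z)^2 = 0"
    and "cnj b^2 - 2 * of_int X * cnj b + (of_int z)^2 = 0"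
    using arg_cong[OF assms, of "of_int :: int \<Rightarrow> complex"]
    by (simp_all add: b_def complex_eq_iff power2_eq_square algebra_simps)
  then have "satisfies_rec (map of_int (test_coeffs X z))
      (\<lambda>m. of_int (test_seq X Y z s C D m) :: complex)"
    unfolding test_seq_complex b_def[symmetric]
    by (intro satisfies_rec_add satisfies_rec_scale satisfies_rec_geometric satisfies_rec_n_geometric
        test_coeffs_double_root) auto
  then show ?thesis by (simp only: satisfies_rec_of_int)
qed

lemma is_LRS_test_seq:
  assumes "X^2 + Y^2 = z^2"
  shows "is_LRS (test_coeffs X z) (map (test_seq X Y z s C D) [0..<6]) (test_seq X Y z s C D)"
  unfolding is_LRS_iff using satisfies_rec_test_seq[OF assms] by (simp add: test_coeffs_def)

section \<open>Diophantine approximation and the Lagrange constant\<close>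

definition round_err :: "real \<Rightarrow> nat \<Rightarrow> real" where
  "round_err t m = real m * t - of_int (round (real m * t))"

definition approx_denoms :: "real \<Rightarrow> real \<Rightarrow> nat set" where
  "approx_denoms t c = {m. 0 < m \<and> real m * \<bar>round_err t m\<bar> < c}"

lemma abs_sub_round_le: "\<bar>(x::real) - of_int (round x)\<bar> \<le> \<bar>x - of_int h\<bar>"
proof (cases "h = round x")
  case False
  then have "1 \<le> \<bar>h - round x\<bar>" by linarith
  then have "1 \<le> \<bar>of_int h - of_int (round x) :: real\<bar>"
    by (metis of_int_1_le_iff of_int_abs of_int_diff)
  then show ?thesis using of_int_round_abs_le[of x] by linarith
qed simp

lemma abs_round_err_le: "\<bar>round_err t m\<bar> \<le> 1 / 2"
  unfolding round_err_def using of_int_round_abs_le[of "real m * t"] by linarith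

lemma round_err_nonzero:
  assumes "t \<notin> \<rat>" "m > 0"
  shows "round_err t m \<noteq> 0"
proof
  assume "round_err t m = 0"
  then have "t = of_int (round (real m * t)) / of_nat m"
    using assms(2) by (simp add: round_err_def field_simps)
  then show False using assms(1) by (metis Rats_divide Rats_of_int Rats_of_nat)
qed

lemma lagrange_pair_approx:
  fixes n m :: int
  assumes "m \<noteq> 0" "\<bar>t - of_int n / of_int m\<bar> < c / (of_int m)\<^sup>2"
  shows "nat \<bar>m\<bar> \<in> approx_denoms t c" and "\<bar>of_int n\<bar> < \<bar>of_int m\<bar> * \<bar>t\<bar> + \<bar>c\<bar>"
proof -
  define M where "M = \<bar>of_int m :: real\<bar>"
  have M: "M \<ge> 1" "(of_int m)\<^sup>2 = M * M"
    using assms(1) by (auto simp: M_def power2_eq_square)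
  have "\<bar>of_int m * t - of_int n\<bar> = M * \<bar>t - of_int n / of_int m\<bar>"
    using assms(1) by (simp add: M_def abs_mult [symmetric] algebra_simps)
  also have "\<dots> < M * (c / (M * M))"
    using assms M by (intro mult_strict_left_mono) auto
  finally have close: "\<bar>of_int m * t - of_int n\<bar> * M < c"
    using M by (simp add: field_simps)
  have j: "real (nat \<bar>m\<bar>) = M" by (simp add: M_def)
  have "\<bar>real (nat \<bar>m\<bar>) * t - of_int (sgn m * n)\<bar> = \<bar>of_int m * t - of_int n\<bar>"
    using assms(1) by (cases "m > 0") (auto simp: abs_minus_commute algebra_simps)
  then have "\<bar>round_err t (nat \<bar>m\<bar>)\<bar> \<le> \<bar>of_int m * t - of_int n\<bar>"
    unfolding round_err_def by (metis abs_sub_round_le)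
  then have "real (nat \<bar>m\<bar>) * \<bar>round_err t (nat \<bar>m\<bar>)\<bar> \<le> M * \<bar>of_int m * t - of_int n\<bar>"
    unfolding j using M by (intro mult_left_mono) auto
  with close assms(1) show "nat \<bar>m\<bar> \<in> approx_denoms t c"
    by (simp add: approx_denoms_def mult.commute)
  have "\<bar>of_int m * t - of_int n\<bar> \<le> \<bar>of_int m * t - of_int n\<bar> * M"
    using M by (intro mult_le_cancel_left1[THEN iffD2]) auto
  then have "\<bar>of_int m * t - of_int n\<bar> < \<bar>c\<bar>" using close by linarith
  moreover have "\<bar>of_int m * t\<bar> = \<bar>of_int m\<bar> * \<bar>t\<bar>" by (rule abs_mult)
  ultimately show "\<bar>of_int n\<bar> < \<bar>of_int m\<bar> * \<bar>t\<bar> + \<bar>c\<bar>" by linarith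
qed

lemma infinite_lagrange_pairs_iff:
  "infinite {(n :: int, m :: int). m \<noteq> 0 \<and> \<bar>t - of_int n / of_int m\<bar> < c / (of_int m)\<^sup>2}
     \<longleftrightarrow> infinite (approx_denoms t c)"
  (is "infinite ?P \<longleftrightarrow> _")
proof
  assume "infinite (approx_denoms t c)"
  moreover have "inj_on (\<lambda>m. (round (real m * t), int m)) (approx_denoms t c)"
    by (auto simp: inj_on_def)
  moreover have "(\<lambda>m. (round (real m * t), int m)) ` approx_denoms t c \<subseteq> ?P"
  proof (rule image_subsetI)
    fix m assume "m \<in> approx_denoms t c"
    then have m: "m > 0" "real m * \<bar>round_err t m\<bar> < c" by (auto simp: approx_denoms_def)
    have "\<bar>t - of_int (round (real m * t)) / real m\<bar> = \<bar>round_err t m / real m\<bar>"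
      using m unfolding round_err_def by (simp add: diff_divide_distrib)
    also have "\<dots> = \<bar>round_err t m\<bar> / real m" by simp
    also have "\<dots> < c / (real m)\<^sup>2" using m by (simp add: field_simps power2_eq_square)
    finally show "(round (real m * t), int m) \<in> ?P" using m by simp
  qed
  ultimately show "infinite ?P" using inj_on_finite by blast
next
  assume "infinite ?P"
  show "infinite (approx_denoms t c)"
  proof
    assume "finite (approx_denoms t c)"
    then obtain M :: nat where M: "\<forall>m \<in> approx_denoms t c. m \<le> M"
      by (meson finite_nat_set_iff_bounded_le)
    obtain K :: nat where K: "real M * \<bar>t\<bar> + \<bar>c\<bar> \<le> real K" using real_arch_simple by blast
    have "?P \<subseteq> {- int K..int K} \<times> {- int M..int M}"
    proof clarify
      fix n m :: int assume "m \<noteq> 0" "\<bar>t - of_int n / of_int m\<bar> < c / (of_int m)\<^sup>2"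
      note approx = lagrange_pair_approx[OF this]
      have "nat \<bar>m\<bar> \<le> M" using M approx(1) by blast
      then have m: "\<bar>m\<bar> \<le> int M" by simp
      then have "\<bar>of_int m\<bar> * \<bar>t\<bar> \<le> real M * \<bar>t\<bar>"
        by (intro mult_right_mono) (simp_all flip: of_int_abs)
      then have "real_of_int \<bar>n\<bar> < real_of_int (int K)" using approx(2) K by simp
      then have "\<bar>n\<bar> \<le> int K" by linarith
      with m show "n \<in> {- int K..int K} \<and> m \<in> {- int M..int M}" by auto
    qed
    moreover have "finite ({- int K..int K} \<times> {- int M..int M})" by simp
    ultimately show False using \<open>infinite ?P\<close> by (simp add: finite_subset)
  qed
qed

lemma lagrange_constant_eq_Inf: "lagrange_constant t = Inf {c. infinite (approx_denoms t c)}"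
  unfolding lagrange_constant_def infinite_lagrange_pairs_iff ..

lemma infinite_approx_denoms_pos:
  assumes "infinite (approx_denoms t c)"
  shows "c > 0"
proof -
  obtain m where "m \<in> approx_denoms t c" using assms infinite_imp_nonempty by blast
  then have "real m * \<bar>round_err t m\<bar> < c" by (simp add: approx_denoms_def)
  moreover have "0 \<le> real m * \<bar>round_err t m\<bar>" by simp
  ultimately show ?thesis by linarith
qed

lemma bdd_below_infinite_approx_denoms: "bdd_below {c. infinite (approx_denoms t c)}"
  by (rule bdd_belowI[of _ 0]) (auto dest: infinite_approx_denoms_pos)

lemma infinite_approx_denoms_one:
  assumes "t \<notin> \<rat>"
  shows "infinite (approx_denoms t 1)"
proof
  assume fin: "finite (approx_denoms t 1)"
  define \<delta> where "\<delta> = Min (insert 1 ((\<lambda>m. \<bar>round_err t m\<bar>) ` approx_denoms t 1))"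
  have "\<delta> > 0"
    using fin round_err_nonzero[OF assms] by (auto simp: \<delta>_def approx_denoms_def)
  then obtain N :: nat where N: "1 / \<delta> < real N" using reals_Archimedean2 by blast
  moreover have "1 / \<delta> > 0" using \<open>\<delta> > 0\<close> by simp
  ultimately have "real N > 0" by linarith
  then have "N > 0" by simp
  then obtain h k where hk: "0 < k" "k \<le> int N" "\<bar>of_int k * t - of_int h\<bar> < 1 / real N"
    using Dirichlet_approx by blast
  have err: "\<bar>round_err t (nat k)\<bar> < 1 / real N"
    using abs_sub_round_le[of "real (nat k) * t" h] hk unfolding round_err_def by simp
  have "real (nat k) * \<bar>round_err t (nat k)\<bar> \<le> real N * \<bar>round_err t (nat k)\<bar>"
    using hk by (intro mult_right_mono) auto
  also have "\<dots> < 1" using err \<open>N > 0\<close> by (simp add: field_simps)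
  finally have "nat k \<in> approx_denoms t 1" using hk by (simp add: approx_denoms_def)
  then have "\<delta> \<le> \<bar>round_err t (nat k)\<bar>" using fin unfolding \<delta>_def by (intro Min_le) auto
  moreover have "1 / real N < \<delta>" using N \<open>\<delta> > 0\<close> \<open>N > 0\<close> by (simp add: field_simps)
  ultimately show False using err by linarith
qed

lemma lagrange_constant_nonneg: "t \<notin> \<rat> \<Longrightarrow> 0 \<le> lagrange_constant t"
  unfolding lagrange_constant_eq_Inf
  by (rule cInf_greatest) (auto dest: infinite_approx_denoms_one infinite_approx_denoms_pos)

lemma lagrange_constant_le_one: "t \<notin> \<rat> \<Longrightarrow> lagrange_constant t \<le> 1"
  unfolding lagrange_constant_eq_Inf
  by (rule cInf_lower) (auto simp: infinite_approx_denoms_one bdd_below_infinite_approx_denoms)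

lemma cos_ge_one_minus_sq: "1 - x^2 / 2 \<le> cos (x::real)"
proof -
  have "sin (x/2) ^ 2 \<le> (x/2) ^ 2"
    using abs_sin_x_le_abs_x[of "x/2"] by (metis abs_ge_zero power2_abs power_mono)
  then show ?thesis using cos_double_sin[of "x/2"] by (simp add: power_divide)
qed

lemma abs_sin_ge_cubic: "\<bar>x\<bar> * (1 - x^2 / 6) \<le> \<bar>sin (x::real)\<bar>"
proof -
  have "\<bar>sin x - (\<Sum>m<3. sin_coeff m * x ^ m)\<bar> \<le> inverse (fact 3) * \<bar>x\<bar> ^ 3"
    by (rule Maclaurin_sin_bound)
  moreover have "(\<Sum>m<3. sin_coeff m * x ^ m) = x"
    by (simp add: sin_coeff_def eval_nat_numeral lessThan_Suc)
  moreover have "inverse (fact 3) * \<bar>x\<bar> ^ 3 = \<bar>x\<bar> * x^2 / 6"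
    by (simp add: eval_nat_numeral power2_eq_square abs_mult_self_eq)
  ultimately have "\<bar>sin x - x\<bar> \<le> \<bar>x\<bar> * x^2 / 6" by simp
  moreover have "\<bar>x\<bar> \<le> \<bar>sin x\<bar> + \<bar>sin x - x\<bar>" by linarith
  ultimately show ?thesis by (simp add: right_diff_distrib)
qed

text \<open>Up to finitely many m, a cos x \<le> m |sin x| rules out m |x| \<le> b when b < a, while
  m |sin x| < a cos x forces m |x| < b when a < b.\<close>
lemma sq_bound_of_cos_le_sin:
  fixes a b m x :: real
  assumes "0 < a" "0 \<le> m" "a * cos x \<le> m * \<bar>sin x\<bar>" "m * \<bar>x\<bar> \<le> b"
  shows "2 * m^2 * (a - b) \<le> a * b^2"
proof -
  have "a * (1 - x^2 / 2) \<le> a * cos x"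
    using assms(1) cos_ge_one_minus_sq by (intro mult_left_mono) auto
  moreover have "m * \<bar>sin x\<bar> \<le> m * \<bar>x\<bar>"
    using assms(2) abs_sin_x_le_abs_x by (intro mult_left_mono)
  moreover have "a * (1 - x^2 / 2) = a - a * x^2 / 2" by (simp add: algebra_simps)
  ultimately have "a - b \<le> a * x^2 / 2" using assms(3,4) by linarith
  then have "m^2 * (a - b) \<le> m^2 * (a * x^2 / 2)" by (intro mult_left_mono) auto
  also have "\<dots> = a * (m * \<bar>x\<bar>)^2 / 2" by (simp add: power_mult_distrib)
  also have "\<dots> \<le> a * b^2 / 2"
    using assms by (intro divide_right_mono mult_left_mono power_mono) auto
  finally show ?thesis by simp
qed

lemma sq_bound_of_sin_lt_cos:
  fixes a b m x :: real
  assumes "0 < a" "0 \<le> b" "0 \<le> m" "m * \<bar>sin x\<bar> < a * cos x" "\<bar>x\<bar> \<le> pi / 2" "b \<le> m * \<bar>x\<bar>"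
  shows "2 * m^2 * (b - a) \<le> 3 * a^2 * b"
proof -
  have "\<bar>x\<bar>^2 < 2^2" using assms(5) pi_less_4 by (intro power_strict_mono) auto
  then have x: "0 \<le> 1 - x^2 / 6" "1 / 3 \<le> 1 - x^2 / 6" by simp_all
  have "m * \<bar>x\<bar> * (1 - x^2 / 6) \<le> m * \<bar>sin x\<bar>"
    using abs_sin_ge_cubic[of x] assms(3) by (simp add: mult_left_mono mult.assoc)
  also have "\<dots> < a * cos x" by (fact assms(4))
  also have "\<dots> \<le> a" using assms(1) by (simp add: mult_left_le)
  finally have less: "m * \<bar>x\<bar> * (1 - x^2 / 6) < a" .
  have "m * \<bar>x\<bar> * (1 / 3) \<le> m * \<bar>x\<bar> * (1 - x^2 / 6)"
    using x assms(3) by (intro mult_left_mono) auto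
  then have mx: "m * \<bar>x\<bar> < 3 * a" using less by linarith
  have "b * (1 - x^2 / 6) \<le> m * \<bar>x\<bar> * (1 - x^2 / 6)"
    using x assms(6) by (intro mult_right_mono)
  then have "b - a \<le> b * x^2 / 6" using less by (simp add: algebra_simps)
  then have "m^2 * (b - a) \<le> m^2 * (b * x^2 / 6)" by (intro mult_left_mono) auto
  also have "\<dots> = b * (m * \<bar>x\<bar>)^2 / 6" by (simp add: power_mult_distrib)
  also have "\<dots> \<le> b * (3 * a)^2 / 6"
    using assms mx by (intro divide_right_mono mult_left_mono power_mono) auto
  finally show ?thesis by (simp add: power_mult_distrib algebra_simps)
qed

lemma eventually_less_mult_sq:
  fixes c d :: real
  assumes "0 < d"
  shows "\<forall>\<^sub>F m in sequentially. c < d * real m ^ 2"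
proof -
  obtain N :: nat where N: "c / d < real N" using reals_Archimedean2 by blast
  have "c < d * real m ^ 2" if "m \<ge> max N 1" for m
  proof -
    have "real N \<le> real m" "real m \<le> real m ^ 2" using that by (auto simp: power2_eq_square)
    then have "c / d < real m ^ 2" using N by linarith
    then show ?thesis using assms by (simp add: pos_divide_less_eq mult.commute)
  qed
  then show ?thesis by (rule eventually_sequentiallyI)
qed

lemma abs_pi_round_err: "\<bar>pi * round_err t m\<bar> = pi * \<bar>round_err t m\<bar>"
  by (simp add: abs_mult)

lemma lagrange_constant_ge:
  assumes "t \<notin> \<rat>" "0 < a"
    and good: "\<forall>\<^sub>F m in sequentially.
                 a * cos (pi * round_err t m) \<le> real m * \<bar>sin (pi * round_err t m)\<bar>"
  shows "a / pi \<le> lagrange_constant t"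
  unfolding lagrange_constant_eq_Inf
proof (rule cInf_greatest)
  show "{c. infinite (approx_denoms t c)} \<noteq> {}" using infinite_approx_denoms_one[OF assms(1)] by auto
  fix c assume "c \<in> {c. infinite (approx_denoms t c)}"
  then have inf: "infinite (approx_denoms t c)" by simp
  show "a / pi \<le> c"
  proof (rule ccontr)
    assume "\<not> a / pi \<le> c"
    then have "pi * c < a" by (simp add: field_simps)
    then have "\<forall>\<^sub>F m in sequentially. a * (pi * c)^2 < 2 * (a - pi * c) * real m ^ 2"
      by (intro eventually_less_mult_sq) simp
    with good have "\<forall>\<^sub>F m in sequentially. m \<notin> approx_denoms t c"
    proof eventually_elim
      case (elim m)
      show ?case
      proof
        assume "m \<in> approx_denoms t c"
        then have "real m * \<bar>pi * round_err t m\<bar> \<le> pi * c"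
          by (simp add: approx_denoms_def abs_pi_round_err)
        from sq_bound_of_cos_le_sin[OF assms(2) _ elim(1) this] elim(2) show False
          by (simp add: algebra_simps)
      qed
    qed
    then have "finite (approx_denoms t c)"
      by (simp add: eventually_cofinite flip: cofinite_eq_sequentially)
    with inf show False by simp
  qed
qed

lemma lagrange_constant_le:
  assumes "t \<notin> \<rat>" "0 < a"
    and bad: "\<exists>\<^sub>F m in sequentially.
                real m * \<bar>sin (pi * round_err t m)\<bar> < a * cos (pi * round_err t m)"
  shows "lagrange_constant t \<le> a / pi"
proof (rule dense_ge)
  fix c assume "a / pi < c"
  then have "a < pi * c" by (simp add: field_simps)
  then have "\<forall>\<^sub>F m in sequentially. 3 * a^2 * (pi * c) < 2 * (pi * c - a) * real m ^ 2"
    by (intro eventually_less_mult_sq) simp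
  moreover have "\<forall>\<^sub>F m in sequentially. 0 < m" by (rule eventually_gt_at_top)
  ultimately have "\<forall>\<^sub>F m in sequentially.
      real m * \<bar>sin (pi * round_err t m)\<bar> < a * cos (pi * round_err t m) \<longrightarrow> m \<in> approx_denoms t c"
  proof eventually_elim
    case (elim m)
    show ?case
    proof
      assume less: "real m * \<bar>sin (pi * round_err t m)\<bar> < a * cos (pi * round_err t m)"
      have "\<bar>pi * round_err t m\<bar> \<le> pi / 2"
        using abs_round_err_le[of t m] by (simp add: abs_pi_round_err)
      have "\<not> pi * c \<le> real m * \<bar>pi * round_err t m\<bar>"
      proof
        assume "pi * c \<le> real m * \<bar>pi * round_err t m\<bar>"
        with sq_bound_of_sin_lt_cos[OF assms(2) _ _ less \<open>\<bar>pi * round_err t m\<bar> \<le> pi / 2\<close>]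
        have "2 * (real m)^2 * (pi * c - a) \<le> 3 * a^2 * (pi * c)"
          using \<open>a < pi * c\<close> assms(2) by simp
        with elim(1) show False by (simp add: algebra_simps)
      qed
      then show "m \<in> approx_denoms t c"
        using elim(2) by (simp add: approx_denoms_def abs_pi_round_err)
    qed
  qed
  then have "\<exists>\<^sub>F m in sequentially. m \<in> approx_denoms t c" using bad by (rule frequently_mp)
  then have "infinite (approx_denoms t c)"
    by (simp add: frequently_cofinite flip: cofinite_eq_sequentially)
  then show "lagrange_constant t \<le> c"
    unfolding lagrange_constant_eq_Inf by (intro cInf_lower bdd_below_infinite_approx_denoms) simp
qed

section \<open>Signs of the test sequences\<close>

lemma both_nonneg_iff:
  fixes s p q :: real
  assumes "s \<noteq> 0"
  shows "0 \<le> s * (p * s + q) \<and> 0 \<le> s * (p * s - q) \<longleftrightarrow> \<bar>q\<bar> \<le> p * \<bar>s\<bar>"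
  using assms by (cases "s > 0") (auto simp: zero_le_mult_iff abs_if)

lemma sin_nonzero:
  assumes "0 < \<bar>x\<bar>" "\<bar>x\<bar> < pi"
  shows "sin x \<noteq> 0"
proof -
  have "0 < sin \<bar>x\<bar>" using assms by (intro sin_gt_zero)
  then show ?thesis by (cases "0 \<le> x") auto
qed

locale rational_rotation =
  fixes X Y z :: int and t :: real
  assumes z_pos: "0 < z"
    and cos_eq: "cos (2 * pi * t) = of_int X / of_int z"
    and sin_eq: "sin (2 * pi * t) = of_int Y / of_int z"
    and irrational: "t \<notin> \<rat>"
begin

lemma pythagorean: "X^2 + Y^2 = z^2"
proof -
  have "(of_int X / of_int z)^2 + (of_int Y / of_int z)^2 = (1::real)"
    using sin_cos_squared_add[of "2 * pi * t"] by (simp add: cos_eq sin_eq add.commute)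
  then have "real_of_int (X^2 + Y^2) = of_int (z^2)"
    using z_pos by (simp add: field_simps)
  then show ?thesis by (simp only: of_int_eq_iff)
qed

lemma gauss_pow_polar:
  "of_int (fst (gauss_pow X Y m)) = of_int z ^ m * cos (real m * (2 * pi * t))"
  "of_int (snd (gauss_pow X Y m)) = of_int z ^ m * sin (real m * (2 * pi * t))"
proof -
  have "Complex (of_int X) (of_int Y) = complex_of_real (of_int z) * cis (2 * pi * t)"
    using z_pos by (simp add: complex_eq_iff cos_eq sin_eq)
  then have "Complex (of_int (fst (gauss_pow X Y m))) (of_int (snd (gauss_pow X Y m)))
      = (complex_of_real (of_int z) * cis (2 * pi * t)) ^ m"
    by (simp only: Complex_gauss_pow)
  also have "\<dots> = complex_of_real (of_int z ^ m) * cis (real m * (2 * pi * t))"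
    by (simp only: power_mult_distrib Complex.DeMoivre of_real_power)
  finally have "Complex (of_int (fst (gauss_pow X Y m))) (of_int (snd (gauss_pow X Y m)))
      = complex_of_real (of_int z ^ m) * cis (real m * (2 * pi * t))" .
  then show "of_int (fst (gauss_pow X Y m)) = of_int z ^ m * cos (real m * (2 * pi * t))"
    and "of_int (snd (gauss_pow X Y m)) = of_int z ^ m * sin (real m * (2 * pi * t))"
    by (simp_all add: complex_eq_iff)
qed

lemma test_seq_polar:
  fixes m :: nat
  defines "x \<equiv> pi * round_err t m"
  shows "of_int (test_seq X Y z s C D m)
           = of_int z ^ m * (2 * (sin x * (of_int D * real m * sin x + of_int (s * C) * cos x)))"
proof -
  have "real m * (2 * pi * t) = 2 * x + 2 * pi * of_int (round (real m * t))"
    by (simp add: x_def round_err_def algebra_simps)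
  then have c: "cos (real m * (2 * pi * t)) = 1 - 2 * sin x ^ 2"
    and s: "sin (real m * (2 * pi * t)) = 2 * sin x * cos x"
    by (simp_all add: cos_add sin_add cos_double_sin sin_double)
  have "of_int (test_seq X Y z s C D m)
      = of_int D * real m * (of_int z ^ m - of_int z ^ m * cos (real m * (2 * pi * t)))
        + of_int (s * C) * (of_int z ^ m * sin (real m * (2 * pi * t)))"
    by (simp add: test_seq_def gauss_pow_polar)
  also have "\<dots> = of_int z ^ m * (2 * (sin x * (of_int D * real m * sin x + of_int (s * C) * cos x)))"
    unfolding c s by (simp add: algebra_simps power2_eq_square)
  finally show ?thesis .
qed

lemma test_seq_both_nonneg_iff:
  assumes "0 < m" "0 \<le> C" "0 < D"
  defines "x \<equiv> pi * round_err t m"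
  shows "0 \<le> test_seq X Y z 1 C D m \<and> 0 \<le> test_seq X Y z (-1) C D m
           \<longleftrightarrow> of_int C / of_int D * cos x \<le> real m * \<bar>sin x\<bar>"
proof -
  have x: "0 < \<bar>x\<bar>" "\<bar>x\<bar> \<le> pi / 2"
    using round_err_nonzero[OF irrational assms(1)] abs_round_err_le[of t m]
    by (auto simp: x_def abs_mult)
  then have "sin x \<noteq> 0" by (intro sin_nonzero) auto
  have "0 \<le> cos x" using x(2) by (intro cos_ge_zero) auto
  have sign: "0 \<le> test_seq X Y z s C D m \<longleftrightarrow>
      0 \<le> sin x * (of_int D * real m * sin x + of_int (s * C) * cos x)" for s
  proof -
    have "0 < real_of_int z ^ m" using z_pos by simp
    moreover have "0 \<le> test_seq X Y z s C D m \<longleftrightarrow> 0 \<le> real_of_int (test_seq X Y z s C D m)"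
      by simp
    ultimately show ?thesis unfolding test_seq_polar x_def by (simp add: zero_le_mult_iff)
  qed
  have "0 \<le> test_seq X Y z 1 C D m \<and> 0 \<le> test_seq X Y z (-1) C D m \<longleftrightarrow>
      0 \<le> sin x * (of_int D * real m * sin x + of_int C * cos x) \<and>
      0 \<le> sin x * (of_int D * real m * sin x - of_int C * cos x)"
    unfolding sign by simp
  also have "\<dots> \<longleftrightarrow> \<bar>of_int C * cos x\<bar> \<le> of_int D * real m * \<bar>sin x\<bar>"
    by (rule both_nonneg_iff) fact
  also have "\<dots> \<longleftrightarrow> of_int C / of_int D * cos x \<le> real m * \<bar>sin x\<bar>"
    using assms(2,3) \<open>0 \<le> cos x\<close> by (simp add: abs_mult field_simps)
  finally show ?thesis .
qed

lemma test_seqs_ultimately_nonneg_iff: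
  assumes "0 \<le> C" "0 < D"
  shows "ultimately_nonneg (test_seq X Y z 1 C D) \<and> ultimately_nonneg (test_seq X Y z (-1) C D)
    \<longleftrightarrow> (\<forall>\<^sub>F m in sequentially.
           of_int C / of_int D * cos (pi * round_err t m) \<le> real m * \<bar>sin (pi * round_err t m)\<bar>)"
proof -
  have "ultimately_nonneg (test_seq X Y z 1 C D) \<and> ultimately_nonneg (test_seq X Y z (-1) C D)
      \<longleftrightarrow> (\<forall>\<^sub>F m in sequentially. 0 \<le> test_seq X Y z 1 C D m \<and> 0 \<le> test_seq X Y z (-1) C D m)"
    by (simp add: ultimately_nonneg_def eventually_conj_iff flip: eventually_sequentially)
  also have "\<dots> \<longleftrightarrow> (\<forall>\<^sub>F m in sequentially.
      of_int C / of_int D * cos (pi * round_err t m) \<le> real m * \<bar>sin (pi * round_err t m)\<bar>)"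
    by (intro eventually_cong eventually_mono[OF eventually_gt_at_top[of 0]]
        test_seq_both_nonneg_iff assms)
  finally show ?thesis .
qed

lemma lagrange_constant_ge_test_seq:
  assumes "0 < C" "0 < D"
    and "ultimately_nonneg (test_seq X Y z 1 C D)" "ultimately_nonneg (test_seq X Y z (-1) C D)"
  shows "of_int C / of_int D / pi \<le> lagrange_constant t"
  using assms test_seqs_ultimately_nonneg_iff[of C D]
  by (intro lagrange_constant_ge irrational) auto

lemma lagrange_constant_le_test_seq:
  assumes "0 < C" "0 < D"
    and "\<not> (ultimately_nonneg (test_seq X Y z 1 C D) \<and> ultimately_nonneg (test_seq X Y z (-1) C D))"
  shows "lagrange_constant t \<le> of_int C / of_int D / pi"
  using assms test_seqs_ultimately_nonneg_iff[of C D]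
  by (intro lagrange_constant_le irrational) (auto simp: not_eventually not_le)

end

section \<open>Rational points on the unit circle\<close>

lemma coprime_square_diff:
  fixes r b y :: int
  assumes "coprime r b" "b dvd y"
  shows "coprime (r^2 - y) b"
proof (rule coprimeI)
  fix c assume c: "c dvd r^2 - y" "c dvd b"
  then have "c dvd (r^2 - y) + y" using assms(2) by (blast intro: dvd_add dvd_trans)
  then have "c dvd r^2" by simp
  then show "is_unit c" using c(2) assms(1) coprime_common_divisor by (metis coprime_power_left_iff)
qed

lemma iterate_sq_sub_two_denominators:
  fixes c :: "nat \<Rightarrow> real" and a b :: int
  assumes "coprime a b" "b \<noteq> 0" "c 0 = of_int a / of_int b" "\<And>k. c (Suc k) = c k ^ 2 - 2"
  shows "\<exists>r. coprime r b \<and> c k = of_int r / of_int b ^ (2 ^ k)"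
proof (induction k)
  case 0 then show ?case using assms(1,3) by auto
next
  case (Suc k)
  then obtain r where r: "coprime r b" "c k = of_int r / of_int b ^ (2 ^ k)" by blast
  define B where "B = real_of_int b ^ 2 ^ k"
  have "B \<noteq> 0" using assms(2) by (simp add: B_def)
  have "c (Suc k) = (of_int r / B) ^ 2 - 2" using assms(4) r(2) by (simp add: B_def)
  also have "\<dots> = (of_int r ^ 2 - 2 * B ^ 2) / B ^ 2" using \<open>B \<noteq> 0\<close> by (simp add: field_simps)
  also have "\<dots> = of_int (r ^ 2 - 2 * b ^ (2 ^ Suc k)) / of_int b ^ (2 ^ Suc k)"
    by (simp add: B_def power_mult[symmetric] mult.commute)
  finally have "c (Suc k) = of_int (r ^ 2 - 2 * b ^ (2 ^ Suc k)) / of_int b ^ (2 ^ Suc k)" .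
  moreover have "coprime (r ^ 2 - 2 * b ^ (2 ^ Suc k)) b"
    using r(1) by (intro coprime_square_diff dvd_mult dvd_power) auto
  ultimately show ?case by blast
qed

lemma iterate_sq_sub_two_inj:
  fixes c :: "nat \<Rightarrow> real"
  assumes "c 0 \<in> \<rat>" "c 0 \<notin> \<int>" "\<And>k. c (Suc k) = c k ^ 2 - 2"
  shows "inj c"
proof -
  obtain a b :: int where ab: "0 < b" "coprime a b" "c 0 = of_int a / of_int b"
    using Rats_cases'[OF assms(1)] by blast
  have "b \<noteq> 1" using ab(3) assms(2) by auto
  have "\<forall>k. \<exists>r. coprime r b \<and> c k = of_int r / of_int b ^ (2 ^ k)"
    using iterate_sq_sub_two_denominators[OF ab(2) _ ab(3) assms(3)] ab(1) by simp
  then obtain R where R: "\<And>k. coprime (R k) b" "\<And>k. c k = of_int (R k) / of_int b ^ (2 ^ k)"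
    by (metis choice)
  have "c k \<noteq> c l" if "k < l" for k l
  proof
    assume eq: "c k = c l"
    have "(2::nat) ^ k < 2 ^ l" using \<open>k < l\<close> by simp
    then obtain d where d: "(2::nat) ^ l = 2 ^ k + d" "0 < d"
      by (metis less_imp_add_positive)
    have "real_of_int (R l) = of_int (R k * b ^ d)"
      using eq ab(1) unfolding R(2) by (simp add: d power_add field_simps)
    then have "R l = R k * b ^ d" by (simp only: of_int_eq_iff)
    then have "b dvd R l" using d(2) by simp
    then have "is_unit b" using R(1)[of l] coprime_absorb_right by blast
    then show False using ab(1) \<open>b \<noteq> 1\<close> by simp
  qed
  then show "inj c" by (metis injI linorder_neqE_nat)
qed

lemma double_Re_square: "cmod w = 1 \<Longrightarrow> 2 * Re (w ^ 2) = (2 * Re w) ^ 2 - 2"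
  by (simp add: cmod_def power2_eq_square algebra_simps)

text \<open>The numbers 2 Re (g^(2^k)) satisfy c (k + 1) = c k ^ 2 - 2; if c 0 is rational but not an
  integer their denominators grow, so they are pairwise distinct, whereas a root of unity has only
  finitely many powers.\<close>
lemma root_of_unity_double_Re_Int:
  assumes "cmod g = 1" "g ^ m = 1" "0 < m" "2 * Re g \<in> \<rat>"
  shows "2 * Re g \<in> \<int>"
proof (rule ccontr)
  assume "2 * Re g \<notin> \<int>"
  define c where "c k = 2 * Re (g ^ (2 ^ k))" for k
  have "c (Suc k) = c k ^ 2 - 2" for k
    using double_Re_square[of "g ^ (2 ^ k)"] assms(1)
    by (simp add: c_def norm_power power_mult[symmetric] mult.commute)
  then have "inj c"
    using assms(4) \<open>2 * Re g \<notin> \<int>\<close> by (intro iterate_sq_sub_two_inj) (auto simp: c_def)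
  moreover have "range c \<subseteq> (\<lambda>j. 2 * Re (g ^ j)) ` {..<m}"
  proof (rule image_subsetI)
    fix k
    have "g ^ (2 ^ k) = g ^ (2 ^ k mod m)"
      using assms(2) by (metis mod_div_mult_eq power_add power_mult power_one mult.commute mult_1)
    then show "c k \<in> (\<lambda>j. 2 * Re (g ^ j)) ` {..<m}"
      unfolding c_def using assms(3) by (intro image_eqI[where x = "2 ^ k mod m"]) auto
  qed
  ultimately have "finite (UNIV :: nat set)"
    by (metis finite_imageI finite_lessThan finite_subset finite_imageD)
  then show False by simp
qed

lemma int_square_less_four:
  fixes k :: int
  assumes "k^2 < 4" "k \<noteq> 0"
  shows "k^2 = 1"
proof -
  have "\<bar>k\<bar> < 2"
  proof (rule ccontr)
    assume "\<not> \<bar>k\<bar> < 2"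
    then have "2 * 2 \<le> \<bar>k\<bar> * \<bar>k\<bar>" by (intro mult_mono) auto
    then show False using assms(1) by (simp add: power2_eq_square abs_mult_self_eq)
  qed
  then have "\<bar>k\<bar> = 1" using assms(2) by linarith
  then show ?thesis by (metis power2_abs one_power2)
qed

lemma not_both_half_integers:
  fixes p q :: real
  assumes "p^2 + q^2 = 1" "p \<noteq> 0" "q \<noteq> 0" "2 * p \<in> \<int>"
  shows "2 * q \<notin> \<int>"
proof
  assume "2 * q \<in> \<int>"
  then obtain l where l: "2 * q = of_int l" by (metis Ints_cases)
  obtain k where k: "2 * p = of_int k" using assms(4) by (metis Ints_cases)
  have "real_of_int (k^2 + l^2) = (2 * p)^2 + (2 * q)^2" by (simp add: k l)
  also have "\<dots> = 4" using assms(1) by (simp add: power_mult_distrib algebra_simps)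
  finally have sum: "k^2 + l^2 = 4" by linarith
  have "k \<noteq> 0" "l \<noteq> 0" using k l assms(2,3) by auto
  then have "0 < k^2" "0 < l^2" by simp_all
  then have "k^2 = 1" "l^2 = 1"
    using sum \<open>k \<noteq> 0\<close> \<open>l \<noteq> 0\<close> by (intro int_square_less_four; linarith)+
  with sum show False by simp
qed

lemma rational_unit_not_root_of_unity:
  fixes p q :: real
  assumes "p \<in> \<rat>" "q \<in> \<rat>" "p^2 + q^2 = 1" "p \<noteq> 0" "q \<noteq> 0" "0 < m"
  shows "Complex p q ^ m \<noteq> 1"
proof
  assume root: "Complex p q ^ m = 1"
  show False
  proof (cases "2 * p \<in> \<int>")
    case False
    then show False using root_of_unity_double_Re_Int[of "Complex p q" m] assms root
      by (simp add: cmod_def)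
  next
    case True
    then have "2 * q \<notin> \<int>" using not_both_half_integers assms by blast
    then have "2 * Re (Complex (- q) p) \<notin> \<int>"
      by (metis Ints_minus complex.sel(1) minus_minus mult_minus_right)
    moreover have "Complex (- q) p ^ (4 * m) = 1"
    proof -
      have "Complex (- q) p = \<i> * Complex p q" by (simp add: complex_eq_iff)
      then have "Complex (- q) p ^ (4 * m) = \<i> ^ (4 * m) * Complex p q ^ (4 * m)"
        by (simp only: power_mult_distrib)
      also have "\<dots> = (\<i> ^ 4) ^ m * (Complex p q ^ m) ^ 4"
        by (metis power_mult mult.commute)
      finally show ?thesis using root by simp
    qed
    ultimately show False using root_of_unity_double_Re_Int[of "Complex (- q) p" "4 * m"] assms
      by (simp add: cmod_def add.commute)
  qed
qed

lemma setT_rational_rotation: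
  assumes "t \<in> setT"
  obtains X Y z where "rational_rotation X Y z t"
proof -
  obtain p q where pq: "p \<in> \<rat>" "q \<in> \<rat>" "p^2 + q^2 = 1" "p \<noteq> 0" "q \<noteq> 0"
    and t: "t = Arg (Complex p q) / (2 * pi)"
    using assms unfolding setT_def setA_def by blast
  have "cmod (Complex p q) = 1" using pq(3) by (simp add: cmod_def)
  then have cis: "cis (2 * pi * t) = Complex p q"
    using cis_Arg[of "Complex p q"] pq(4) by (simp add: t sgn_div_norm complex_eq_iff)
  obtain a1 b1 a2 b2 :: int
    where "0 < b1" "p = of_int a1 / of_int b1" "0 < b2" "q = of_int a2 / of_int b2"
    using Rats_cases'[OF pq(1)] Rats_cases'[OF pq(2)] by metis
  then have pq_frac: "p = of_int (a1 * b2) / of_int (b1 * b2)"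
      "q = of_int (a2 * b1) / of_int (b1 * b2)"
    and "0 < b1 * b2" by simp_all
  have "t \<notin> \<rat>"
  proof
    assume "t \<in> \<rat>"
    then obtain a b :: int where "0 < b" "t = of_int a / of_int b" by (metis Rats_cases')
    then have "real (nat b) * (2 * pi * t) = 2 * pi * of_int a" by simp
    then have "Complex p q ^ nat b = cis (2 * pi * of_int a)"
      unfolding cis[symmetric] Complex.DeMoivre by (simp only:)
    also have "\<dots> = 1" by (simp add: cis.ctr complex_eq_iff)
    finally have "Complex p q ^ nat b = 1" .
    then show False using rational_unit_not_root_of_unity[OF pq] \<open>0 < b\<close> by simp
  qed
  then have "rational_rotation (a1 * b2) (a2 * b1) (b1 * b2) t"
    using \<open>0 < b1 * b2\<close> cis pq_frac by unfold_locales (auto simp: complex_eq_iff)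
  then show ?thesis by (rule that)
qed

section \<open>Approximating pi\<close>

fun leibniz_den :: "nat \<Rightarrow> nat" where
  "leibniz_den 0 = 1"
| "leibniz_den (Suc M) = leibniz_den M * ((4 * M + 1) * (4 * M + 3))"

fun leibniz_num :: "nat \<Rightarrow> nat" where
  "leibniz_num 0 = 0"
| "leibniz_num (Suc M) = leibniz_num M * ((4 * M + 1) * (4 * M + 3)) + 2 * leibniz_den M"

lemma leibniz_den_pos: "0 < leibniz_den M"
  by (induction M) auto

lemma leibniz_num_div_den:
  "real (leibniz_num M) / real (leibniz_den M) = (\<Sum>i<2 * M. (-1) ^ i / real (2 * i + 1))"
proof (induction M)
  case (Suc M)
  define P where "P = (4 * M + 1) * (4 * M + 3)"
  have "0 < P" "0 < leibniz_den M" by (simp_all add: P_def leibniz_den_pos)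
  moreover have "leibniz_num (Suc M) = leibniz_num M * P + 2 * leibniz_den M"
    and "leibniz_den (Suc M) = leibniz_den M * P" by (simp_all add: P_def)
  ultimately have "real (leibniz_num (Suc M)) / real (leibniz_den (Suc M))
      = real (leibniz_num M) / real (leibniz_den M) + 2 / real P"
    by (simp add: field_simps)
  moreover have "2 / real P = 1 / real (4 * M + 1) - 1 / real (4 * M + 3)"
    by (simp add: P_def field_simps)
  moreover have "(\<Sum>i<2 * Suc M. (-1) ^ i / real (2 * i + 1))
      = (\<Sum>i<2 * M. (-1) ^ i / real (2 * i + 1)) + (1 / real (4 * M + 1) - 1 / real (4 * M + 3))"
    by (simp add: algebra_simps)
  ultimately show ?case by (simp only: Suc.IH)
qed simp

lemma pi_leibniz_bounds:
  fixes M :: nat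
  defines "s \<equiv> real (leibniz_num M) / real (leibniz_den M)"
  shows "4 * s \<le> pi" "pi \<le> 4 * s + 4 / real (4 * M + 1)"
proof -
  define a where "a i = 1 / real (2 * i + 1)" for i
  have "a \<longlonglongrightarrow> 0" unfolding a_def by real_asymp
  moreover have "0 \<le> a n" "a (Suc n) \<le> a n" for n by (simp_all add: a_def frac_le)
  ultimately have "(\<Sum>i<2 * M. (-1) ^ i * a i) \<le> (\<Sum>i. (-1) ^ i * a i)"
    and "(\<Sum>i. (-1) ^ i * a i) \<le> (\<Sum>i<2 * M + 1. (-1) ^ i * a i)"
    using summable_Leibniz'(2,4) by blast+
  moreover have "(\<Sum>i. (-1) ^ i * a i) = pi / 4" unfolding pi_series a_def by (simp add: mult.commute)
  moreover have "(\<Sum>i<2 * M. (-1) ^ i * a i) = s"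
    unfolding s_def leibniz_num_div_den a_def by simp
  ultimately show "4 * s \<le> pi" "pi \<le> 4 * s + 4 / real (4 * M + 1)"
    by (simp_all add: a_def)
qed

section \<open>Partial recursive programs\<close>

definition computes :: "recf \<Rightarrow> nat \<Rightarrow> (nat list \<Rightarrow> nat) \<Rightarrow> bool" where
  "computes f k F \<longleftrightarrow> (\<forall>xs. length xs = k \<longrightarrow> eval f xs (F xs))"

lemma computesD: "computes f k F \<Longrightarrow> length xs = k \<Longrightarrow> eval f xs (F xs)"
  by (simp add: computes_def)

lemma computes_cong:
  "computes f k F \<Longrightarrow> (\<And>xs. length xs = k \<Longrightarrow> F xs = G xs) \<Longrightarrow> computes f k G"
  by (simp add: computes_def)

lemma computes_Zero: "computes Zero k (\<lambda>_. 0)"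
  by (simp add: computes_def eval_Zero)

lemma computes_Proj: "i < k \<Longrightarrow> computes (Proj i) k (\<lambda>xs. xs ! i)"
  by (simp add: computes_def eval_Proj)

lemma computes_Comp:
  assumes "list_all2 (\<lambda>g G. computes g k G) gs Gs"
    and "\<And>xs. length xs = k \<Longrightarrow> eval f (map (\<lambda>G. G xs) Gs) (H xs)"
  shows "computes (Comp f gs) k H"
  unfolding computes_def
proof (intro allI impI)
  fix xs :: "nat list" assume "length xs = k"
  moreover have "length Gs = length gs" using assms(1) by (simp add: list_all2_lengthD)
  ultimately show "eval (Comp f gs) xs (H xs)"
    using assms by (intro eval_Comp[where ys = "map (\<lambda>G. G xs) Gs"])
      (auto simp: computes_def dest: list_all2_nthD)
qed

lemma computes_Comp1:
  assumes "computes f 1 F" "computes g k G" "\<And>xs. length xs = k \<Longrightarrow> H xs = F [G xs]"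
  shows "computes (Comp f [g]) k H"
  using assms by (intro computes_Comp[where Gs = "[G]"]) (auto simp: computes_def)

lemma computes_Comp2:
  assumes "computes f 2 F" "computes g k G" "computes h k H'"
    and "\<And>xs. length xs = k \<Longrightarrow> H xs = F [G xs, H' xs]"
  shows "computes (Comp f [g, h]) k H"
  using assms by (intro computes_Comp[where Gs = "[G, H']"]) (auto simp: computes_def)

lemma computes_Prec:
  assumes "computes f k F" "computes g m G" "m = k + 2" "n = k + 1"
    and "\<And>ys. length ys = k \<Longrightarrow> H (0 # ys) = F ys"
    and "\<And>i ys. length ys = k \<Longrightarrow> H (Suc i # ys) = G (i # H (i # ys) # ys)"
  shows "computes (Prec f g) n H"
  unfolding computes_def
proof (intro allI impI)
  fix xs :: "nat list" assume "length xs = n"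
  then obtain i ys where xs: "xs = i # ys" and ys: "length ys = k" using assms(4) by (cases xs) auto
  have "eval (Prec f g) (i # ys) (H (i # ys))"
  proof (induction i)
    case 0 show ?case using assms(1,5) ys by (auto simp: computes_def intro: eval_Prec0)
  next
    case (Suc i) then show ?case using assms(2,3,6) ys by (auto simp: computes_def intro: eval_PrecS)
  qed
  then show "eval (Prec f g) xs (H xs)" by (simp add: xs)
qed

lemma computes_Succ: "computes Succ 1 (\<lambda>xs. Suc (xs ! 0))"
  by (auto simp: computes_def length_Suc_conv intro: eval_Succ)

definition rsuc :: "recf \<Rightarrow> recf" where "rsuc g = Comp Succ [g]"

lemma computes_rsuc: "computes g k G \<Longrightarrow> computes (rsuc g) k (\<lambda>xs. Suc (G xs))"
  unfolding rsuc_def by (rule computes_Comp1[OF computes_Succ]) auto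

fun rconst :: "nat \<Rightarrow> recf" where
  "rconst 0 = Zero"
| "rconst (Suc c) = rsuc (rconst c)"

lemma computes_rconst: "computes (rconst c) k (\<lambda>_. c)"
  by (induction c) (auto simp: computes_Zero computes_rsuc)

definition add_prog :: recf where "add_prog = Prec (Proj 0) (rsuc (Proj 1))"
definition mult_prog :: recf where "mult_prog = Prec Zero (Comp add_prog [Proj 1, Proj 2])"
definition pred_prog :: recf where "pred_prog = Prec Zero (Proj 0)"
definition sub_prog :: recf where
  "sub_prog = Comp (Prec (Proj 0) (Comp pred_prog [Proj 1])) [Proj 1, Proj 0]"
definition sg_prog :: recf where "sg_prog = Prec Zero (rconst 1)"

lemma computes_add_prog: "computes add_prog 2 (\<lambda>xs. xs ! 0 + xs ! 1)"
  unfolding add_prog_def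
  by (rule computes_Prec[where k = 1, OF computes_Proj computes_rsuc[OF computes_Proj[of 1 3]]]) auto

lemma computes_mult_prog: "computes mult_prog 2 (\<lambda>xs. xs ! 0 * xs ! 1)"
  unfolding mult_prog_def
  by (rule computes_Prec[where k = 1, OF computes_Zero
        computes_Comp2[OF computes_add_prog computes_Proj[of 1 3] computes_Proj[of 2 3]]]) auto

lemma computes_pred_prog: "computes pred_prog 1 (\<lambda>xs. xs ! 0 - 1)"
  unfolding pred_prog_def by (rule computes_Prec[where k = 0, OF computes_Zero computes_Proj[of 0 2]]) auto

lemma computes_sub_prog: "computes sub_prog 2 (\<lambda>xs. xs ! 0 - xs ! 1)"
proof -
  have "computes (Prec (Proj 0) (Comp pred_prog [Proj 1])) 2 (\<lambda>xs. xs ! 1 - xs ! 0)"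
    by (rule computes_Prec[where k = 1, OF computes_Proj
          computes_Comp1[OF computes_pred_prog computes_Proj[of 1 3]]]) auto
  then show ?thesis
    unfolding sub_prog_def by (rule computes_Comp2[OF _ computes_Proj computes_Proj]) auto
qed

lemma computes_sg_prog: "computes sg_prog 1 (\<lambda>xs. if xs ! 0 = 0 then 0 else 1)"
  unfolding sg_prog_def by (rule computes_Prec[where k = 0, OF computes_Zero computes_rconst[of _ 2]]) auto

definition radd :: "recf \<Rightarrow> recf \<Rightarrow> recf" where "radd g h = Comp add_prog [g, h]"
definition rmult :: "recf \<Rightarrow> recf \<Rightarrow> recf" where "rmult g h = Comp mult_prog [g, h]"
definition rsub :: "recf \<Rightarrow> recf \<Rightarrow> recf" where "rsub g h = Comp sub_prog [g, h]"
definition rsg :: "recf \<Rightarrow> recf" where "rsg g = Comp sg_prog [g]"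

lemma computes_radd: "computes g k G \<Longrightarrow> computes h k H \<Longrightarrow> computes (radd g h) k (\<lambda>xs. G xs + H xs)"
  unfolding radd_def by (rule computes_Comp2[OF computes_add_prog]) auto

lemma computes_rmult: "computes g k G \<Longrightarrow> computes h k H \<Longrightarrow> computes (rmult g h) k (\<lambda>xs. G xs * H xs)"
  unfolding rmult_def by (rule computes_Comp2[OF computes_mult_prog]) auto

lemma computes_rsub: "computes g k G \<Longrightarrow> computes h k H \<Longrightarrow> computes (rsub g h) k (\<lambda>xs. G xs - H xs)"
  unfolding rsub_def by (rule computes_Comp2[OF computes_sub_prog]) auto

lemma computes_rsg: "computes g k G \<Longrightarrow> computes (rsg g) k (\<lambda>xs. if G xs = 0 then 0 else 1)"
  unfolding rsg_def by (rule computes_Comp1[OF computes_sg_prog]) auto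

definition rif_zero :: "recf \<Rightarrow> recf \<Rightarrow> recf \<Rightarrow> recf" where
  "rif_zero c a b = radd (rmult (rsub (rconst 1) (rsg c)) a) (rmult (rsg c) b)"

lemma computes_rif_zero:
  assumes "computes c k C" "computes a k A" "computes b k B"
  shows "computes (rif_zero c a b) k (\<lambda>xs. if C xs = 0 then A xs else B xs)"
proof (rule computes_cong)
  show "computes (rif_zero c a b) k
      (\<lambda>xs. (1 - (if C xs = 0 then 0 else 1)) * A xs + (if C xs = 0 then 0 else 1) * B xs)"
    unfolding rif_zero_def using assms
    by (intro computes_radd computes_rmult computes_rsub computes_rsg computes_rconst)
qed simp

lemmas computes_arith =
  computes_radd computes_rmult computes_rsub computes_rsuc computes_rconst computes_Proj

definition triangle_prog :: recf where "triangle_prog = Prec Zero (radd (Proj 1) (rsuc (Proj 0)))"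

lemma computes_triangle_prog: "computes triangle_prog 1 (\<lambda>xs. triangle (xs ! 0))"
  unfolding triangle_prog_def
  by (rule computes_Prec[where k = 0, OF computes_Zero
        computes_radd[OF computes_Proj[of 1 2] computes_rsuc[OF computes_Proj[of 0 2]]]]) auto

definition rprod_encode :: "recf \<Rightarrow> recf \<Rightarrow> recf" where
  "rprod_encode g h = radd (Comp triangle_prog [radd g h]) g"

lemma computes_rprod_encode:
  assumes "computes g k G" "computes h k H"
  shows "computes (rprod_encode g h) k (\<lambda>xs. prod_encode (G xs, H xs))"
proof (rule computes_cong)
  show "computes (rprod_encode g h) k (\<lambda>xs. triangle (G xs + H xs) + G xs)"
    unfolding rprod_encode_def using assms
    by (intro computes_radd computes_Comp1[OF computes_triangle_prog]) (auto intro: computes_radd)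
qed (simp add: prod_encode_def)

definition rint_lin :: "int \<Rightarrow> int \<Rightarrow> recf" where
  "rint_lin p q =
     (let pos = radd (rmult (Proj 0) (rconst (nat p))) (rmult (Proj 1) (rconst (nat q)));
          neg = radd (rmult (Proj 0) (rconst (nat (- p)))) (rmult (Proj 1) (rconst (nat (- q))))
      in radd (rmult (rconst 2) (rsub pos neg)) (rsub (rmult (rconst 2) (rsub neg pos)) (rconst 1)))"

lemma int_encode_diff: "int_encode (int a - int b) = 2 * (a - b) + (2 * (b - a) - 1)"
  by (simp add: int_encode_def sum_encode_def nat_diff_distrib) linarith

lemma computes_rint_lin:
  "computes (rint_lin p q) 2 (\<lambda>xs. int_encode (p * int (xs ! 0) + q * int (xs ! 1)))"
proof (rule computes_cong)
  define a where "a xs = xs ! 0 * nat p + xs ! 1 * nat q" for xs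
  define b where "b xs = xs ! 0 * nat (- p) + xs ! 1 * nat (- q)" for xs
  show "computes (rint_lin p q) 2 (\<lambda>xs. int_encode (int (a xs) - int (b xs)))"
    unfolding rint_lin_def Let_def int_encode_diff a_def b_def by (intro computes_arith) auto
  show "int_encode (int (a xs) - int (b xs)) = int_encode (p * int (xs ! 0) + q * int (xs ! 1))" for xs
    unfolding a_def b_def by (simp add: algebra_simps)
qed

section \<open>The approximation algorithm\<close>

fun last_nonzero :: "(nat \<Rightarrow> nat) \<Rightarrow> nat \<Rightarrow> nat" where
  "last_nonzero f 0 = 0"
| "last_nonzero f (Suc j) = (if f (Suc j) = 0 then last_nonzero f j else Suc j)"

lemma last_nonzero_le: "last_nonzero f J \<le> J"
  by (induction J) auto

lemma last_nonzero_nonzero: "last_nonzero f J = 0 \<or> f (last_nonzero f J) \<noteq> 0"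
  by (induction J) auto

lemma last_nonzero_after: "last_nonzero f J < i \<Longrightarrow> i \<le> J \<Longrightarrow> f i = 0"
  by (induction J) (auto simp: le_Suc_eq split: if_splits)

definition last_nonzero_prog :: "recf \<Rightarrow> recf" where
  "last_nonzero_prog r =
     Prec Zero (rif_zero (Comp r [rsuc (Proj 0), Proj 2]) (Proj 1) (rsuc (Proj 0)))"

lemma computes_last_nonzero_prog:
  assumes "computes r 2 (\<lambda>xs. R (xs ! 0) (xs ! 1))"
  shows "computes (last_nonzero_prog r) 2 (\<lambda>xs. last_nonzero (\<lambda>j. R j (xs ! 1)) (xs ! 0))"
  unfolding last_nonzero_prog_def
proof (rule computes_Prec[where k = 1, OF computes_Zero])
  have "computes (Comp r [rsuc (Proj 0), Proj 2]) 3 (\<lambda>xs. R (Suc (xs ! 0)) (xs ! 2))"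
    using assms by (rule computes_Comp2[OF _ computes_rsuc[OF computes_Proj] computes_Proj]) auto
  then show "computes (rif_zero (Comp r [rsuc (Proj 0), Proj 2]) (Proj 1) (rsuc (Proj 0))) 3
      (\<lambda>xs. if R (Suc (xs ! 0)) (xs ! 2) = 0 then xs ! 1 else Suc (xs ! 0))"
    by (intro computes_rif_zero computes_rsuc computes_Proj) auto
qed auto

definition leibniz_factor_prog :: recf where
  "leibniz_factor_prog =
     rmult (radd (rmult (rconst 4) (Proj 0)) (rconst 1)) (radd (rmult (rconst 4) (Proj 0)) (rconst 3))"

lemma computes_leibniz_factor_prog:
  "0 < k \<Longrightarrow> computes leibniz_factor_prog k (\<lambda>xs. (4 * xs ! 0 + 1) * (4 * xs ! 0 + 3))"
  unfolding leibniz_factor_prog_def by (intro computes_arith)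

definition leibniz_den_prog :: recf where
  "leibniz_den_prog = Prec (rconst 1) (rmult (Proj 1) leibniz_factor_prog)"

lemma computes_leibniz_den_prog: "computes leibniz_den_prog 1 (\<lambda>xs. leibniz_den (xs ! 0))"
proof -
  have "computes (rmult (Proj 1) leibniz_factor_prog) 2
      (\<lambda>xs. xs ! 1 * ((4 * xs ! 0 + 1) * (4 * xs ! 0 + 3)))"
    by (intro computes_rmult computes_Proj computes_leibniz_factor_prog) auto
  then show ?thesis
    unfolding leibniz_den_prog_def by (rule computes_Prec[where k = 0, OF computes_rconst]) auto
qed

definition leibniz_num_prog :: recf where
  "leibniz_num_prog = Prec Zero
     (radd (rmult (Proj 1) leibniz_factor_prog) (rmult (rconst 2) (Comp leibniz_den_prog [Proj 0])))"

lemma computes_leibniz_num_prog: "computes leibniz_num_prog 1 (\<lambda>xs. leibniz_num (xs ! 0))"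
proof -
  have "computes (Comp leibniz_den_prog [Proj 0]) 2 (\<lambda>xs. leibniz_den (xs ! 0))"
    by (rule computes_Comp1[OF computes_leibniz_den_prog computes_Proj]) auto
  then have "computes (radd (rmult (Proj 1) leibniz_factor_prog)
      (rmult (rconst 2) (Comp leibniz_den_prog [Proj 0]))) 2
      (\<lambda>xs. xs ! 1 * ((4 * xs ! 0 + 1) * (4 * xs ! 0 + 3)) + 2 * leibniz_den (xs ! 0))"
    by (intro computes_radd computes_rmult computes_rconst computes_Proj
        computes_leibniz_factor_prog) auto
  then show ?thesis
    unfolding leibniz_num_prog_def by (rule computes_Prec[where k = 0, OF computes_Zero]) auto
qed

definition decides_UPP6 :: "recf \<Rightarrow> bool" where
  "decides_UPP6 d \<longleftrightarrow> (\<forall>a u0 :: int list.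
      length a = 6 \<longrightarrow> length u0 = 6 \<longrightarrow> a ! 5 \<noteq> 0 \<longrightarrow>
      (\<exists>r. eval d (map int_encode (a @ u0)) r \<and>
          (r \<noteq> 0 \<longleftrightarrow> (\<forall>u. is_LRS a u0 u \<longrightarrow> ultimately_nonneg u))))"

lemma UPP_decidable_order6_iff: "UPP_decidable_order6 \<longleftrightarrow> (\<exists>d. decides_UPP6 d)"
  unfolding UPP_decidable_order6_def decides_UPP6_def ..

definition upp_answer :: "recf \<Rightarrow> int list \<Rightarrow> int list \<Rightarrow> nat" where
  "upp_answer d a u0 = (SOME r. eval d (map int_encode (a @ u0)) r \<and>
      (r \<noteq> 0 \<longleftrightarrow> (\<forall>u. is_LRS a u0 u \<longrightarrow> ultimately_nonneg u)))"

lemma upp_answer: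
  assumes "decides_UPP6 d" "length a = 6" "length u0 = 6" "a ! 5 \<noteq> 0"
  shows "eval d (map int_encode (a @ u0)) (upp_answer d a u0)"
    and "upp_answer d a u0 \<noteq> 0 \<longleftrightarrow> (\<forall>u. is_LRS a u0 u \<longrightarrow> ultimately_nonneg u)"
  using someI_ex[OF assms(1)[unfolded decides_UPP6_def, rule_format, OF assms(2-4)]]
  by (simp_all add: upp_answer_def)

definition test_answer :: "recf \<Rightarrow> int \<Rightarrow> int \<Rightarrow> int \<Rightarrow> int \<Rightarrow> nat \<Rightarrow> nat \<Rightarrow> nat" where
  "test_answer d X Y z s j K =
     upp_answer d (test_coeffs X z) (map (test_seq X Y z s (int j) (int K)) [0..<6])"

text \<open>test_seq X Y z s j K m is linear in (j, K), with coefficients s Im \<beta>^m and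
  m (z^m - Re \<beta>^m).\<close>
definition test_prog :: "recf \<Rightarrow> int \<Rightarrow> int \<Rightarrow> int \<Rightarrow> int \<Rightarrow> recf" where
  "test_prog d X Y z s = Comp d (map (rconst \<circ> int_encode) (test_coeffs X z) @
     map (\<lambda>m. rint_lin (s * snd (gauss_pow X Y m)) (int m * (z ^ m - fst (gauss_pow X Y m))))
       [0..<6])"

lemma test_coeffs_order6: "z \<noteq> 0 \<Longrightarrow> length (test_coeffs X z) = 6 \<and> test_coeffs X z ! 5 \<noteq> 0"
  by (simp add: test_coeffs_def)

lemma computes_test_prog:
  assumes "decides_UPP6 d" "z \<noteq> 0"
  shows "computes (test_prog d X Y z s) 2 (\<lambda>xs. test_answer d X Y z s (xs ! 0) (xs ! 1))"
  unfolding test_prog_def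
proof (rule computes_Comp)
  let ?Gs = "map (\<lambda>c _. int_encode c) (test_coeffs X z) @
    map (\<lambda>m xs. int_encode (test_seq X Y z s (int (xs ! 0)) (int (xs ! 1)) m)) [0..<6]"
  have "test_seq X Y z s (int x) (int y) m
      = s * snd (gauss_pow X Y m) * int x + int m * (z ^ m - fst (gauss_pow X Y m)) * int y" for x y m
    by (simp add: test_seq_def algebra_simps)
  then show "list_all2 (\<lambda>g G. computes g 2 G) (map (rconst \<circ> int_encode) (test_coeffs X z) @
      map (\<lambda>m. rint_lin (s * snd (gauss_pow X Y m)) (int m * (z ^ m - fst (gauss_pow X Y m))))
        [0..<6]) ?Gs"
    by (intro list_all2_appendI)
      (auto simp: list_all2_map1 list_all2_map2 list_all2_same computes_rconst
        computes_rint_lin[unfolded One_nat_def])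
  fix xs :: "nat list"
  have eq: "map (\<lambda>G. G xs) ?Gs = map int_encode (test_coeffs X z @
      map (test_seq X Y z s (int (xs ! 0)) (int (xs ! 1))) [0..<6])"
    by simp
  show "eval d (map (\<lambda>G. G xs) ?Gs) (test_answer d X Y z s (xs ! 0) (xs ! 1))"
    unfolding eq test_answer_def
    by (rule upp_answer(1)[OF assms(1)]) (use test_coeffs_order6[OF assms(2)] in auto)
qed

definition both_answer :: "recf \<Rightarrow> int \<Rightarrow> int \<Rightarrow> int \<Rightarrow> nat \<Rightarrow> nat \<Rightarrow> nat" where
  "both_answer d X Y z j K = test_answer d X Y z 1 j K * test_answer d X Y z (-1) j K"

text \<open>j / K brackets pi L(t) within 1 / K and num / den approximates pi / 4, so the code stands
  for the rational j den / (4 K num).\<close>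
definition lagrange_code :: "recf \<Rightarrow> int \<Rightarrow> int \<Rightarrow> int \<Rightarrow> nat \<Rightarrow> nat" where
  "lagrange_code d X Y z K = prod_encode
     (2 * (last_nonzero (\<lambda>j. both_answer d X Y z j K) (4 * K) * leibniz_den (3 * K)),
      4 * K * leibniz_num (3 * K) - 1)"

definition lagrange_prog :: "recf \<Rightarrow> int \<Rightarrow> int \<Rightarrow> int \<Rightarrow> recf" where
  "lagrange_prog d X Y z =
     (let K = rsuc (Proj 1); M = rmult (rconst 3) K;
          j = Comp (last_nonzero_prog (rmult (test_prog d X Y z 1) (test_prog d X Y z (-1))))
                [rmult (rconst 4) K, K]
      in rprod_encode (rmult (rconst 2) (rmult j (Comp leibniz_den_prog [M])))
           (rsub (rmult (rmult (rconst 4) K) (Comp leibniz_num_prog [M])) (rconst 1)))"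

lemma computes_lagrange_prog:
  assumes "decides_UPP6 d" "z \<noteq> 0"
  shows "computes (lagrange_prog d X Y z) 2 (\<lambda>xs. lagrange_code d X Y z (Suc (xs ! 1)))"
proof -
  have K: "computes (rsuc (Proj 1)) 2 (\<lambda>xs. Suc (xs ! 1))" by (intro computes_arith) simp
  have M: "computes (rmult (rconst 3) (rsuc (Proj 1))) 2 (\<lambda>xs. 3 * Suc (xs ! 1))"
    by (intro computes_arith) simp
  have "computes (rmult (test_prog d X Y z 1) (test_prog d X Y z (-1))) 2
      (\<lambda>xs. both_answer d X Y z (xs ! 0) (xs ! 1))"
    unfolding both_answer_def using assms by (intro computes_rmult computes_test_prog)
  moreover have "computes (rmult (rconst 4) (rsuc (Proj 1))) 2 (\<lambda>xs. 4 * Suc (xs ! 1))"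
    by (intro computes_arith) simp
  ultimately have "computes
      (Comp (last_nonzero_prog (rmult (test_prog d X Y z 1) (test_prog d X Y z (-1))))
        [rmult (rconst 4) (rsuc (Proj 1)), rsuc (Proj 1)]) 2
      (\<lambda>xs. last_nonzero (\<lambda>j. both_answer d X Y z j (Suc (xs ! 1))) (4 * Suc (xs ! 1)))"
    by (intro computes_Comp2[OF computes_last_nonzero_prog _ K]) auto
  moreover have "computes (Comp leibniz_den_prog [rmult (rconst 3) (rsuc (Proj 1))]) 2
      (\<lambda>xs. leibniz_den (3 * Suc (xs ! 1)))"
    by (rule computes_Comp1[OF computes_leibniz_den_prog M]) simp
  moreover have "computes (Comp leibniz_num_prog [rmult (rconst 3) (rsuc (Proj 1))]) 2
      (\<lambda>xs. leibniz_num (3 * Suc (xs ! 1)))"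
    by (rule computes_Comp1[OF computes_leibniz_num_prog M]) simp
  ultimately show ?thesis
    unfolding lagrange_prog_def lagrange_code_def Let_def
    by (intro computes_rprod_encode computes_arith K)
qed

lemma int_decode_double: "int_decode (2 * A) = int A"
proof -
  have "int_encode (int A) = 2 * A" by (simp add: int_encode_def sum_encode_def)
  then show ?thesis by (metis int_encode_inverse)
qed

lemma rat_of_code_prod_encode: "0 < B \<Longrightarrow> rat_of_code (prod_encode (2 * A, B - 1)) = real A / real B"
  by (simp add: rat_of_code_def int_decode_double)

lemma approx_error:
  fixes w s L K :: real
  assumes "0 \<le> w" "w \<le> 4" "1 \<le> K" "4 * s \<le> pi" "pi \<le> 4 * s + 4 / (12 * K + 1)"
    and "w / pi \<le> L" "L \<le> (w + 1 / K) / pi"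
  shows "\<bar>w / (4 * s) - L\<bar> < 1 / K"
proof -
  have "4 / (12 * K + 1) \<le> 1 / (3 * K)" using assms(3) by (simp add: field_simps)
  then have gap: "pi - 4 * s \<le> 1 / (3 * K)" using assms(5) by linarith
  moreover have "1 / (3 * K) \<le> 1 / 3" using assms(3) by (simp add: field_simps)
  ultimately have s: "2 < 4 * s" using pi_gt3 by linarith
  have "w / (4 * s) - w / pi = w * (pi - 4 * s) / (4 * s * pi)"
    using s by (simp add: field_simps)
  also have "\<dots> \<le> 4 * (1 / (3 * K)) / (2 * 3)"
    using assms(1-4) gap s pi_gt3 by (intro frac_le mult_mono) auto
  finally have upper: "w / (4 * s) - w / pi \<le> 2 / (9 * K)" by simp
  have "w / pi \<le> w / (4 * s)" using assms(1,4) s by (intro divide_left_mono) auto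
  moreover have "L - w / pi \<le> 1 / (K * pi)" using assms(7) by (simp add: add_divide_distrib)
  moreover have "1 / (K * pi) \<le> 1 / (3 * K)"
  proof (rule divide_left_mono)
    show "3 * K \<le> K * pi" using assms(3) pi_gt3 by (simp add: mult.commute mult_right_mono)
  qed (use assms(3) in auto)
  moreover have "2 / (9 * K) < 1 / K" "1 / (3 * K) < 1 / K" using assms(3) by (simp_all add: field_simps)
  ultimately show ?thesis using upper assms(6) by (simp add: abs_if)
qed

context rational_rotation
begin

lemma test_answer_iff:
  assumes "decides_UPP6 d"
  shows "test_answer d X Y z s j K \<noteq> 0 \<longleftrightarrow> ultimately_nonneg (test_seq X Y z s (int j) (int K))"
proof -
  have "length (test_coeffs X z) = 6" "test_coeffs X z ! 5 \<noteq> 0"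
    using test_coeffs_order6 z_pos by simp_all
  moreover have "length (map (test_seq X Y z s (int j) (int K)) [0..<6]) = 6" by simp
  ultimately have "test_answer d X Y z s j K \<noteq> 0 \<longleftrightarrow> (\<forall>u. is_LRS (test_coeffs X z)
      (map (test_seq X Y z s (int j) (int K)) [0..<6]) u \<longrightarrow> ultimately_nonneg u)"
    unfolding test_answer_def by (intro upp_answer(2)[OF assms])
  then show ?thesis using is_LRS_test_seq[OF pythagorean] is_LRS_unique by blast
qed

lemma lagrange_constant_bracket:
  assumes "decides_UPP6 d" "0 < K"
  defines "j \<equiv> last_nonzero (\<lambda>j. both_answer d X Y z j K) (4 * K)"
  shows "real j / real K / pi \<le> lagrange_constant t"
    and "lagrange_constant t \<le> (real j + 1) / real K / pi"
proof -
  have both: "both_answer d X Y z i K \<noteq> 0 \<longleftrightarrow> ultimately_nonneg (test_seq X Y z 1 (int i) (int K))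
      \<and> ultimately_nonneg (test_seq X Y z (-1) (int i) (int K))" for i
    by (simp only: both_answer_def mult_eq_0_iff de_Morgan_disj test_answer_iff[OF assms(1)])
  show "real j / real K / pi \<le> lagrange_constant t"
  proof (cases "j = 0")
    case True then show ?thesis using lagrange_constant_nonneg[OF irrational] by simp
  next
    case False
    then have "both_answer d X Y z j K \<noteq> 0" using last_nonzero_nonzero j_def by metis
    then show ?thesis
      using lagrange_constant_ge_test_seq[of "int j" "int K"] both False assms(2) by simp
  qed
  show "lagrange_constant t \<le> (real j + 1) / real K / pi"
  proof (cases "j < 4 * K")
    case True
    then have "both_answer d X Y z (Suc j) K = 0"
      using last_nonzero_after[of "\<lambda>i. both_answer d X Y z i K" "4 * K" "Suc j"] by (simp add: j_def)
    then have "\<not> (ultimately_nonneg (test_seq X Y z 1 (int (Suc j)) (int K))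
        \<and> ultimately_nonneg (test_seq X Y z (-1) (int (Suc j)) (int K)))"
      using both[of "Suc j"] by simp
    then have "lagrange_constant t \<le> of_int (int (Suc j)) / of_int (int K) / pi"
      using assms(2) by (intro lagrange_constant_le_test_seq) auto
    then show ?thesis by (simp add: add.commute)
  next
    case False
    moreover have "j \<le> 4 * K" unfolding j_def by (rule last_nonzero_le)
    ultimately have "real j = 4 * real K" by simp
    moreover have "pi * real K \<le> 4 * real K" using pi_less_4 by (intro mult_right_mono) auto
    ultimately have "pi * real K \<le> real j + 1" by linarith
    then have "1 \<le> (real j + 1) / (pi * real K)" using assms(2) by (simp add: le_divide_eq_1_pos)
    then have "1 \<le> (real j + 1) / real K / pi" by (simp add: mult.commute)
    then show ?thesis using lagrange_constant_le_one[OF irrational] by linarith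
  qed
qed

lemma lagrange_code_approx:
  assumes "decides_UPP6 d" "0 < K"
  shows "\<bar>rat_of_code (lagrange_code d X Y z K) - lagrange_constant t\<bar> < 1 / real K"
proof -
  define j where "j = last_nonzero (\<lambda>j. both_answer d X Y z j K) (4 * K)"
  define s where "s = real (leibniz_num (3 * K)) / real (leibniz_den (3 * K))"
  have eq: "real (4 * (3 * K) + 1) = 12 * real K + 1" by simp
  have pi: "4 * s \<le> pi" "pi \<le> 4 * s + 4 / (12 * real K + 1)"
    unfolding s_def eq[symmetric] by (rule pi_leibniz_bounds)+
  moreover have "4 / (12 * real K + 1) \<le> 1" using assms(2) by (simp add: field_simps)
  ultimately have "0 < s" using pi_gt3 by linarith
  then have "0 < leibniz_num (3 * K)" by (simp add: s_def zero_less_divide_iff)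
  then have "rat_of_code (lagrange_code d X Y z K)
      = real (j * leibniz_den (3 * K)) / real (4 * K * leibniz_num (3 * K))"
    unfolding lagrange_code_def j_def[symmetric] using assms(2) by (intro rat_of_code_prod_encode) simp
  also have "\<dots> = real j / real K / (4 * s)"
    using assms(2) leibniz_den_pos[of "3 * K"] by (simp add: s_def field_simps)
  finally have code: "rat_of_code (lagrange_code d X Y z K) = real j / real K / (4 * s)" .
  have "j \<le> 4 * K" unfolding j_def by (rule last_nonzero_le)
  then have "real j / real K \<le> 4" using assms(2) by (simp add: field_simps)
  moreover have "real j / real K / pi \<le> lagrange_constant t"
    and "lagrange_constant t \<le> (real j / real K + 1 / real K) / pi"
    using lagrange_constant_bracket[OF assms] by (simp_all add: j_def add_divide_distrib)
  ultimately show ?thesis unfolding code using assms(2) pi by (intro approx_error) auto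
qed

lemma computable_lagrange_constant:
  assumes "decides_UPP6 d"
  shows "computable_real (lagrange_constant t)"
  unfolding computable_real_def
proof (rule exI[of _ "lagrange_prog d X Y z"], intro allI impI)
  fix p n :: nat assume "0 < p"
  have "computes (lagrange_prog d X Y z) 2 (\<lambda>xs. lagrange_code d X Y z (Suc (xs ! 1)))"
    using computes_lagrange_prog[OF assms] z_pos by simp
  from computesD[OF this, of "[p, n]"]
  have "eval (lagrange_prog d X Y z) [p, n] (lagrange_code d X Y z (Suc n))" by simp
  moreover have "\<bar>rat_of_code (lagrange_code d X Y z (Suc n)) - lagrange_constant t\<bar> < real p / real (Suc n)"
  proof -
    have "1 / real (Suc n) \<le> real p / real (Suc n)" using \<open>0 < p\<close> by (intro divide_right_mono) auto
    then show ?thesis using lagrange_code_approx[OF assms, of "Suc n"] by simp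
  qed
  ultimately show "\<exists>c. eval (lagrange_prog d X Y z) [p, n] c
      \<and> \<bar>rat_of_code c - lagrange_constant t\<bar> < real p / real (Suc n)" by blast
qed

end

theorem theorem5p1:
  assumes "UPP_decidable_order6"
  shows "\<forall>t \<in> setT. computable_real (lagrange_constant t)"
proof
  fix t assume "t \<in> setT"
  then obtain X Y z where "rational_rotation X Y z t" by (rule setT_rational_rotation)
  moreover obtain d where "decides_UPP6 d" using assms by (auto simp: UPP_decidable_order6_iff)
  ultimately show "computable_real (lagrange_constant t)"
    by (rule rational_rotation.computable_lagrange_constant)
qed

end
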